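(* There exists a function $f\in\bigcap_{\alpha\in(0,1)}C^{0,\alpha}([0,1])$ which does not have the strong Sard property, i.e. $\mathcal{L}^1(f(S))>0$, but has the relaxed Sard property, i.e. $f_\#(\mathbf{1}_S\mathcal{L}^1)\perp\mathcal{L}^1$, where $S$ is the critical set of $f$.
   Context: $C^{0,\alpha}([0,1])$ is the space of $\alpha$-Hölder continuous real functions on $[0,1]$. $\mathcal{L}^1$ denotes Lebesgue measure on $\mathbb{R}$, $\mathbf{1}_A$ the indicator function of $A$, $f_\#\mu$ the pushforward of the measure $\mu$ under $f$, and $\mu\perp\nu$ means mutual singularity. The critical set $S$ of $f$ is the set of all points $x\in[0,1]$ at which $f$ is either not differentiable or has $f'(x)=0$. *)

theory Defs
  imports "HOL-Analysis.Analysis"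
begin

definition holder_01 :: "real \<Rightarrow> (real \<Rightarrow> real) \<Rightarrow> bool" where
  "holder_01 \<alpha> f \<longleftrightarrow> (\<exists>C. \<forall>x\<in>{0..1}. \<forall>y\<in>{0..1}. \<bar>f x - f y\<bar> \<le> C * \<bar>x - y\<bar> powr \<alpha>)"

definition critical_set :: "(real \<Rightarrow> real) \<Rightarrow> real set" where
  "critical_set f = {x\<in>{0..1}. \<not> (\<exists>D. (f has_real_derivative D) (at x within {0..1}))
                         \<or> (f has_real_derivative 0) (at x within {0..1})}"

definition mutually_singular :: "real measure \<Rightarrow> real measure \<Rightarrow> bool" where
  "mutually_singular \<mu> \<nu> \<longleftrightarrow>
     (\<exists>A\<in>sets borel. emeasure \<mu> A = 0 \<and> emeasure \<nu> (UNIV - A) = 0)"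

end

theory Submission
  imports Defs "HOL-Real_Asymp.Real_Asymp"
begin

(* J(t) = (SUM n. w n * floor (2^n t) / 2^n) with w n = 1 / ((n + 1) (n + 2)) is strictly increasing
   and jumps only at dyadic points; at level N the set J([0,1]) is covered by 2^N + 1 intervals of
   length (SUM m >= N. w m) / 2^N, so K = closure (J([0,1])) is Lebesgue-null.  The generalised
   inverse f of J is continuous, maps J([0,1]) onto [0,1] and is locally constant off K.  Hence every
   noncritical point lies in K; the image of that null set of differentiability points is null, so
   f(S) has full measure in [0,1].  On the other hand f maps S - K into the countable set of values
   taken on the components of the complement of K, and this carries f_#(1_S L^1).
   A jump of size w N / 2^N at scale 2^-N gives |f x - f y| <= 2^-N whenever |x - y| <= w N / 2^N;
   as w decays only polynomially, f is Hoelder of every order below 1. *)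

definition dyadic_floor :: "nat \<Rightarrow> real \<Rightarrow> real" where
  "dyadic_floor n t = of_int \<lfloor>2^n * t\<rfloor> / 2^n"

lemma dyadic_floor_le: "dyadic_floor n t \<le> t"
  by (simp add: dyadic_floor_def divide_le_eq mult.commute)

lemma less_dyadic_floor_add: "t < dyadic_floor n t + 1 / 2^n"
proof -
  have "2^n * t < of_int \<lfloor>2^n * t\<rfloor> + 1" by linarith
  then show ?thesis by (simp add: dyadic_floor_def field_simps)
qed

lemma dyadic_floor_mono: "s \<le> t \<Longrightarrow> dyadic_floor n s \<le> dyadic_floor n t"
  by (simp add: dyadic_floor_def divide_right_mono floor_mono)

lemma dyadic_floor_gap:
  assumes "s + 1 / 2^n \<le> t"
  shows "dyadic_floor n s + 1 / 2^n \<le> dyadic_floor n t"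
proof -
  have "2^n * s + 1 \<le> 2^n * t" using assms by (simp add: field_simps)
  then have "\<lfloor>2^n * s\<rfloor> + 1 \<le> \<lfloor>2^n * t\<rfloor>"
    by (metis floor_add_int floor_mono of_int_1)
  then have "of_int \<lfloor>2^n * s\<rfloor> + 1 \<le> (of_int \<lfloor>2^n * t\<rfloor> :: real)" by linarith
  then show ?thesis
    unfolding dyadic_floor_def add_divide_distrib[symmetric] by (rule divide_right_mono) simp
qed

lemma dyadic_floor_of_int: "dyadic_floor n (of_int k / 2^n) = of_int k / 2^n"
  by (simp add: dyadic_floor_def)

lemma dyadic_floor_dyadic_floor_finer:
  assumes "N \<le> m"
  shows "dyadic_floor m (dyadic_floor N t) = dyadic_floor N t"
proof -
  have "dyadic_floor N t = of_int (\<lfloor>2^N * t\<rfloor> * 2^(m - N)) / 2^m"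
    using assms by (simp add: dyadic_floor_def field_simps flip: power_add)
  then show ?thesis by (metis dyadic_floor_of_int)
qed

lemma dyadic_floor_dyadic_floor_coarser:
  assumes "m \<le> N"
  shows "dyadic_floor m (dyadic_floor N t) = dyadic_floor m t"
proof (rule antisym)
  show "dyadic_floor m (dyadic_floor N t) \<le> dyadic_floor m t"
    by (intro dyadic_floor_mono dyadic_floor_le)
  have "dyadic_floor m t = dyadic_floor N (dyadic_floor m t)"
    using assms by (simp add: dyadic_floor_dyadic_floor_finer)
  also have "\<dots> \<le> dyadic_floor N t" by (intro dyadic_floor_mono dyadic_floor_le)
  finally have "dyadic_floor m (dyadic_floor m t) \<le> dyadic_floor m (dyadic_floor N t)"
    by (rule dyadic_floor_mono)
  then show "dyadic_floor m t \<le> dyadic_floor m (dyadic_floor N t)"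
    by (simp add: dyadic_floor_dyadic_floor_finer)
qed

lemma dyadic_floor_grid:
  assumes "t \<in> {0..1}"
  obtains k :: nat where "k \<le> 2^N" "dyadic_floor N t = real k / 2^N"
proof
  have "0 \<le> \<lfloor>2^N * t\<rfloor>" using assms by simp
  then show "dyadic_floor N t = real (nat \<lfloor>2^N * t\<rfloor>) / 2^N"
    by (simp add: dyadic_floor_def)
  have "\<lfloor>2^N * t\<rfloor> \<le> \<lfloor>2^N * (1::real)\<rfloor>" using assms by (intro floor_mono) simp
  then show "nat \<lfloor>2^N * t\<rfloor> \<le> 2^N" by (simp add: nat_le_iff)
qed

lemma abs_dyadic_floor_le: "\<bar>dyadic_floor n t\<bar> \<le> \<bar>t\<bar> + 1"
proof -
  have "1 / 2^n \<le> (1::real)" by simp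
  then show ?thesis using dyadic_floor_le[of n t] less_dyadic_floor_add[of t n] by linarith
qed

(* Inserting 0 gives the value 0, not Sup {}, when g exceeds x on all of [0,1]. *)
definition pseudo_inverse :: "(real \<Rightarrow> real) \<Rightarrow> real \<Rightarrow> real" where
  "pseudo_inverse g x = Sup (insert 0 {t \<in> {0..1}. g t \<le> x})"

lemma bdd_above_pseudo_inverse_set:
  fixes g :: "real \<Rightarrow> real"
  shows "bdd_above (insert 0 {t \<in> {0..1}. g t \<le> x})"
  by (rule bdd_aboveI[of _ 1]) auto

lemma pseudo_inverse_nonneg: "0 \<le> pseudo_inverse g x"
  unfolding pseudo_inverse_def by (rule cSup_upper[OF _ bdd_above_pseudo_inverse_set]) simp

lemma pseudo_inverse_le_1: "pseudo_inverse g x \<le> 1"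
  unfolding pseudo_inverse_def by (rule cSup_least) auto

lemma pseudo_inverse_mono: "mono (pseudo_inverse g)"
  unfolding pseudo_inverse_def
  by (intro monoI cSup_subset_mono bdd_above_pseudo_inverse_set) auto

lemma pseudo_inverse_left_inverse:
  assumes "strict_mono_on {0..1} g" "t \<in> {0..1}"
  shows "pseudo_inverse g (g t) = t"
proof -
  have "insert 0 {\<tau> \<in> {0..1}. g \<tau> \<le> g t} = {0..t}"
    using assms by (auto simp: strict_mono_on_less_eq)
  then show ?thesis using assms(2) by (simp add: pseudo_inverse_def)
qed

lemma pseudo_inverse_diff_le:
  assumes mono: "mono_on {0..1} g"
    and gap: "\<And>s t. s \<in> {0..1} \<Longrightarrow> t \<in> {0..1} \<Longrightarrow> s + \<eta> \<le> t \<Longrightarrow> \<delta> \<le> g t - g s"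
    and "0 \<le> \<eta>" "x \<le> y" "y - x \<le> \<delta>"
  shows "pseudo_inverse g y - pseudo_inverse g x \<le> \<eta>"
proof (rule ccontr)
  assume contra: "\<not> pseudo_inverse g y - pseudo_inverse g x \<le> \<eta>"
  let ?F = "pseudo_inverse g"
  define s where "s = (?F x + ?F y - \<eta>) / 2"
  \<comment> \<open>[s, s + \<eta>] lies strictly between F x and F y, so g s > x and g (s + \<eta>) \<le> y.\<close>
  have s: "?F x < s" "s + \<eta> < ?F y" using contra by (simp_all add: s_def field_simps)
  have s01: "s \<in> {0..1}" "s + \<eta> \<in> {0..1}"
    using s \<open>0 \<le> \<eta>\<close> pseudo_inverse_nonneg[of g x] pseudo_inverse_le_1[of g y] by auto
  have "x < g s"
  proof (rule ccontr)
    assume "\<not> x < g s"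
    then have "s \<le> ?F x" unfolding pseudo_inverse_def
      using s01 by (intro cSup_upper bdd_above_pseudo_inverse_set) auto
    then show False using s by simp
  qed
  obtain \<tau> where \<tau>: "\<tau> \<in> insert 0 {t \<in> {0..1}. g t \<le> y}" "s + \<eta> < \<tau>"
    using s(2) less_cSup_iff[OF _ bdd_above_pseudo_inverse_set] unfolding pseudo_inverse_def by blast
  have "0 < s + \<eta>" using s(1) \<open>0 \<le> \<eta>\<close> pseudo_inverse_nonneg[of g x] by linarith
  then have \<tau>01: "\<tau> \<in> {0..1}" "g \<tau> \<le> y" using \<tau> by auto
  have "g (s + \<eta>) \<le> g \<tau>" using \<tau>(2) s01 \<tau>01 by (intro mono_onD[OF mono]) auto
  moreover have "\<delta> \<le> g (s + \<eta>) - g s" using s01 by (intro gap) auto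
  ultimately show False using \<open>x < g s\<close> \<tau>01 \<open>y - x \<le> \<delta>\<close> by linarith
qed

lemma abs_pseudo_inverse_diff_le:
  assumes "mono_on {0..1} g"
    and "\<And>s t. s \<in> {0..1} \<Longrightarrow> t \<in> {0..1} \<Longrightarrow> s + \<eta> \<le> t \<Longrightarrow> \<delta> \<le> g t - g s"
    and "0 \<le> \<eta>" "\<bar>y - x\<bar> \<le> \<delta>"
  shows "\<bar>pseudo_inverse g y - pseudo_inverse g x\<bar> \<le> \<eta>"
  using pseudo_inverse_diff_le[OF assms(1,2,3), of x y] pseudo_inverse_diff_le[OF assms(1,2,3), of y x]
    monoD[OF pseudo_inverse_mono, of x y g] monoD[OF pseudo_inverse_mono, of y x g] assms(4)
  by (cases "x \<le> y") auto

lemma pseudo_inverse_locally_constant: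
  assumes "x \<notin> closure (g ` {0..1})"
  shows "\<exists>e>0. \<forall>y\<in>ball x e. pseudo_inverse g y = pseudo_inverse g x"
proof -
  obtain e where e: "0 < e" "ball x e \<subseteq> - closure (g ` {0..1})"
    using assms open_contains_ball[of "- closure (g ` {0..1})"] by auto
  have "pseudo_inverse g y = pseudo_inverse g x" if "y \<in> ball x e" for y
  proof -
    have "closed_segment x y \<subseteq> ball x e"
      using that e(1) by (intro closed_segment_subset convex_ball) auto
    moreover have "g t \<in> closure (g ` {0..1})" if "t \<in> {0..1}" for t
      using that by (intro closure_subset[THEN subsetD] imageI)
    ultimately have avoid: "g t \<notin> closed_segment x y" if "t \<in> {0..1}" for t
      using e(2) that by blast
    have "g t \<le> y \<longleftrightarrow> g t \<le> x" if "t \<in> {0..1}" for t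
      using avoid[OF that] by (cases "x \<le> y") (auto simp: closed_segment_eq_real_ivl)
    then have "{t \<in> {0..1}. g t \<le> y} = {t \<in> {0..1}. g t \<le> x}" by blast
    then show ?thesis by (simp add: pseudo_inverse_def)
  qed
  with e(1) show ?thesis by blast
qed

lemma LIMSEQ_zero_bracket:
  fixes \<delta> :: "nat \<Rightarrow> real"
  assumes "\<delta> \<longlonglongrightarrow> 0" "0 < d" "d \<le> \<delta> 0"
  obtains n where "d \<le> \<delta> n" "\<delta> (Suc n) < d"
proof -
  obtain N where "\<delta> N < d" using assms(1,2) by (metis LIMSEQ_le_const not_le)
  have "\<exists>n. d \<le> \<delta> n \<and> \<delta> (Suc n) < d"
  proof (rule ccontr)
    assume "\<nexists>n. d \<le> \<delta> n \<and> \<delta> (Suc n) < d"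
    then have step: "d \<le> \<delta> n \<Longrightarrow> d \<le> \<delta> (Suc n)" for n by (meson not_le)
    have "d \<le> \<delta> n" for n by (induction n) (use assms(3) step in auto)
    then show False using \<open>\<delta> N < d\<close> by (meson not_le)
  qed
  then show ?thesis using that by blast
qed

lemma holder_01_if_modulus:
  fixes f :: "real \<Rightarrow> real" and \<delta> \<epsilon> :: "nat \<Rightarrow> real"
  assumes "0 < \<alpha>" and \<delta>_pos: "\<And>n. 0 < \<delta> n" and "\<delta> \<longlonglongrightarrow> 0"
    and bounded: "\<And>x. x \<in> {0..1} \<Longrightarrow> \<bar>f x\<bar> \<le> B"
    and modulus: "\<And>x y n. x \<in> {0..1} \<Longrightarrow> y \<in> {0..1} \<Longrightarrow> \<bar>x - y\<bar> \<le> \<delta> n \<Longrightarrow> \<bar>f x - f y\<bar> \<le> \<epsilon> n"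
    and rate: "\<And>n. \<epsilon> n \<le> C * \<delta> (Suc n) powr \<alpha>"
  shows "holder_01 \<alpha> f"
proof -
  have "0 \<le> C * \<delta> 1 powr \<alpha>" using modulus[of 0 0 0] rate[of 0] \<delta>_pos[of 0] by simp
  then have "0 \<le> C" using \<delta>_pos[of 1] by (simp add: zero_le_mult_iff)
  have "0 \<le> B" using bounded[of 0] by simp
  define C' where "C' = C + 2 * B / \<delta> 0 powr \<alpha>"
  have "\<bar>f x - f y\<bar> \<le> C' * \<bar>x - y\<bar> powr \<alpha>" if xy: "x \<in> {0..1}" "y \<in> {0..1}" for x y
  proof (cases "x = y")
    case False
    define d where "d = \<bar>x - y\<bar>"
    have "0 < d" using False by (simp add: d_def)
    have "\<bar>f x - f y\<bar> \<le> C * d powr \<alpha>" if small: "d \<le> \<delta> 0"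
    proof -
      obtain n where n: "d \<le> \<delta> n" "\<delta> (Suc n) < d"
        using \<open>\<delta> \<longlonglongrightarrow> 0\<close> \<open>0 < d\<close> small by (rule LIMSEQ_zero_bracket)
      have "\<bar>f x - f y\<bar> \<le> \<epsilon> n" using modulus xy n(1) by (simp add: d_def)
      also have "\<dots> \<le> C * \<delta> (Suc n) powr \<alpha>" by (rule rate)
      also have "\<dots> \<le> C * d powr \<alpha>"
        using n(2) less_imp_le[OF \<delta>_pos] \<open>0 \<le> C\<close> \<open>0 < \<alpha>\<close> by (intro mult_left_mono powr_mono2) auto
      finally show ?thesis .
    qed
    moreover have "\<bar>f x - f y\<bar> \<le> 2 * B / \<delta> 0 powr \<alpha> * d powr \<alpha>" if "\<delta> 0 < d"
    proof -
      have "\<bar>f x - f y\<bar> \<le> 2 * B" using bounded[OF xy(1)] bounded[OF xy(2)] by linarith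
      also have "\<dots> = 2 * B / \<delta> 0 powr \<alpha> * \<delta> 0 powr \<alpha>" using \<delta>_pos[of 0] by simp
      also have "\<dots> \<le> 2 * B / \<delta> 0 powr \<alpha> * d powr \<alpha>"
        using that \<delta>_pos[of 0] \<open>0 \<le> B\<close> \<open>0 < \<alpha>\<close> by (intro mult_left_mono powr_mono2) auto
      finally show ?thesis .
    qed
    moreover have "0 \<le> C * d powr \<alpha>" "0 \<le> 2 * B / \<delta> 0 powr \<alpha> * d powr \<alpha>"
      using \<open>0 \<le> C\<close> \<open>0 \<le> B\<close> by simp_all
    ultimately show ?thesis unfolding C'_def d_def[symmetric] distrib_right by fastforce
  qed simp
  then show ?thesis unfolding holder_01_def by blast
qed

lemma in_critical_set_if_locally_constant:
  fixes f :: "real \<Rightarrow> real"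
  assumes "x \<in> {0..1}" "\<exists>e>0. \<forall>y\<in>ball x e. f y = f x"
  shows "x \<in> critical_set f"
proof -
  obtain e where e: "0 < e" "\<And>y. y \<in> ball x e \<Longrightarrow> f x = f y" using assms(2) by metis
  have "((\<lambda>_. f x) has_real_derivative 0) (at x)" by (rule DERIV_const)
  then have "(f has_real_derivative 0) (at x)"
    by (rule has_field_derivative_transform_within_open[where S = "ball x e"]) (use e in auto)
  then show ?thesis using assms(1) by (simp add: critical_set_def has_field_derivative_at_within)
qed

lemma negligible_image_noncritical:
  assumes "negligible ({0..1} - critical_set f)"
  shows "negligible (f ` ({0..1} - critical_set f))"
proof (rule negligible_differentiable_image_negligible[OF _ assms])
  show "f differentiable_on {0..1} - critical_set f"
    unfolding differentiable_on_def
  proof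
    fix x assume "x \<in> {0..1} - critical_set f"
    then obtain D where "(f has_real_derivative D) (at x within {0..1})"
      by (auto simp: critical_set_def)
    then have "f differentiable (at x within {0..1})"
      using real_differentiable_def by blast
    then show "f differentiable (at x within {0..1} - critical_set f)"
      by (rule differentiable_within_subset) auto
  qed
qed simp

lemma critical_set_lebesgue:
  assumes "negligible ({0..1} - critical_set f)"
  shows "critical_set f \<in> sets lebesgue"
proof -
  have "critical_set f = {0..1} - ({0..1} - critical_set f)" by (auto simp: critical_set_def)
  moreover have "{0..1::real} \<in> sets lebesgue" by (rule sets_completionI_sets) (simp add: borel_closed)
  ultimately show ?thesis using negligible_imp_sets[OF assms] by (metis sets.Diff)
qed

lemma image_critical_set_lebesgue:
  assumes "continuous_on {0..1} f" "negligible ({0..1} - critical_set f)"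
  shows "f ` critical_set f \<in> sets lebesgue"
    and "emeasure lebesgue (f ` critical_set f) = emeasure lebesgue (f ` {0..1})"
proof -
  let ?E = "f ` ({0..1} - critical_set f)"
  have "negligible ?E" using assms(2) by (rule negligible_image_noncritical)
  then have E: "?E \<in> null_sets lebesgue"
    and EC: "f ` critical_set f \<inter> ?E \<in> null_sets lebesgue"
    by (auto simp: negligible_iff_null_sets[symmetric] intro: negligible_subset)
  have A: "f ` {0..1} \<in> sets lebesgue"
    using compact_continuous_image[OF assms(1)] by (simp add: lmeasurable_compact fmeasurableD)
  have "critical_set f \<subseteq> {0..1}" by (auto simp: critical_set_def)
  then have eq: "f ` critical_set f = (f ` {0..1} - ?E) \<union> (f ` critical_set f \<inter> ?E)" by blast
  show "f ` critical_set f \<in> sets lebesgue"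
    using A E EC by (subst eq) auto
  have "emeasure lebesgue (f ` critical_set f) = emeasure lebesgue (f ` {0..1} - ?E)"
    using A E EC by (subst eq) (intro emeasure_Un_null_set sets.Diff, auto)
  also have "\<dots> = emeasure lebesgue (f ` {0..1})" using E A by (rule emeasure_Diff_null_set)
  finally show "emeasure lebesgue (f ` critical_set f) = emeasure lebesgue (f ` {0..1})" .
qed

lemma countable_image_if_locally_constant:
  fixes f :: "real \<Rightarrow> 'a"
  assumes "\<And>x. x \<in> U \<Longrightarrow> \<exists>e>0. \<forall>y\<in>ball x e. f y = f x"
  shows "countable (f ` U)"
proof (rule countable_subset)
  show "f ` U \<subseteq> f ` \<rat>"
  proof
    fix z assume "z \<in> f ` U"
    then obtain x e where x: "z = f x" "0 < e" "\<forall>y\<in>ball x e. f y = f x"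
      using assms by blast
    obtain r where "r \<in> \<rat>" "x < r" "r < x + e"
      using Rats_dense_in_real[of x "x + e"] \<open>0 < e\<close> by auto
    then have "r \<in> ball x e" by (simp add: dist_real_def)
    then have "f r = f x" using x(3) by blast
    then have "z = f r" using x(1) by simp
    then show "z \<in> f ` \<rat>" using \<open>r \<in> \<rat>\<close> by (rule image_eqI)
  qed
qed (simp add: countable_rat)

lemma mutually_singular_distr_density:
  fixes f :: "real \<Rightarrow> real"
  assumes S: "S \<in> sets lebesgue" and f: "f \<in> borel_measurable lebesgue"
    and N: "N \<in> null_sets lebesgue" and countable: "countable (f ` (S - N))"
  shows "mutually_singular (distr (density lebesgue (indicator S)) borel f) lborel"
proof -
  let ?C = "f ` (S - N)"
  have C: "?C \<in> null_sets lborel" using countable by (rule countable_imp_null_set_lborel)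
  then have A: "UNIV - ?C \<in> sets borel" by auto
  have "emeasure (distr (density lebesgue (indicator S)) borel f) (UNIV - ?C)
      = emeasure (density lebesgue (indicator S)) (f -` (UNIV - ?C))"
    using f A by (simp add: emeasure_distr)
  also have "\<dots> = (\<integral>\<^sup>+ x. indicator S x * indicator (f -` (UNIV - ?C)) x \<partial>lebesgue)"
    using S measurable_sets[OF f A] by (simp add: emeasure_density)
  also have "\<dots> \<le> (\<integral>\<^sup>+ x. indicator N x \<partial>lebesgue)"
    by (intro nn_integral_mono) (auto simp: indicator_def)
  also have "\<dots> = emeasure lebesgue N" using N by (intro nn_integral_indicator) auto
  also have "\<dots> = 0" using N by auto
  finally have "emeasure (distr (density lebesgue (indicator S)) borel f) (UNIV - ?C) = 0"
    by simp
  moreover have "emeasure lborel (UNIV - (UNIV - ?C)) = 0"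
    using null_setsD1[OF C] by (simp add: Diff_Diff_Int)
  ultimately show ?thesis using A unfolding mutually_singular_def by blast
qed

locale dyadic_staircase =
  fixes w :: "nat \<Rightarrow> real"
  assumes weight_pos: "0 < w n"
    and summable_weight: "summable w"
begin

definition staircase :: "real \<Rightarrow> real" where
  "staircase t = (\<Sum>n. w n * dyadic_floor n t)"

lemma summable_staircase: "summable (\<lambda>n. w n * dyadic_floor n t)"
proof (rule summable_comparison_test')
  show "summable (\<lambda>n. w n * (\<bar>t\<bar> + 1))" by (intro summable_mult2 summable_weight)
  show "norm (w n * dyadic_floor n t) \<le> w n * (\<bar>t\<bar> + 1)" for n
    using weight_pos[of n] abs_dyadic_floor_le[of n t] by (simp add: abs_mult)
qed

lemma staircase_diff:
  "staircase t - staircase s = (\<Sum>n. w n * (dyadic_floor n t - dyadic_floor n s))"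
  "summable (\<lambda>n. w n * (dyadic_floor n t - dyadic_floor n s))"
  using suminf_diff[OF summable_staircase summable_staircase, of t s]
    summable_diff[OF summable_staircase summable_staircase, of t s]
  by (simp_all add: staircase_def right_diff_distrib)

lemma staircase_gap:
  assumes "s + 1 / 2^N \<le> t"
  shows "w N / 2^N \<le> staircase t - staircase s"
proof -
  have "0 < 1 / (2::real)^N" by simp
  then have "s \<le> t" using assms by linarith
  then have nonneg: "0 \<le> w n * (dyadic_floor n t - dyadic_floor n s)" for n
    using weight_pos[of n] dyadic_floor_mono[of s t n] by simp
  have "w N / 2^N \<le> w N * (dyadic_floor N t - dyadic_floor N s)"
    using weight_pos[of N] dyadic_floor_gap[OF assms] by (simp add: divide_inverse mult_left_mono)
  also have "\<dots> \<le> (\<Sum>n. w n * (dyadic_floor n t - dyadic_floor n s))"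
    using sum_le_suminf[OF staircase_diff(2), of "{N}"] nonneg by simp
  finally show ?thesis by (simp add: staircase_diff(1))
qed

lemma strict_mono_staircase: "strict_mono staircase"
proof (rule strict_monoI)
  fix s t :: real assume "s < t"
  then obtain N where "(1/2::real)^N < t - s" using real_arch_pow_inv[of "t - s" "1/2"] by auto
  then have "s + 1 / 2^N \<le> t" by (simp add: power_one_over)
  then have "w N / 2^N \<le> staircase t - staircase s" by (rule staircase_gap)
  moreover have "0 < w N / 2^N" using weight_pos by simp
  ultimately show "staircase s < staircase t" by simp
qed

lemma staircase_0: "staircase 0 = 0"
  by (simp add: staircase_def dyadic_floor_def)

lemma staircase_1: "staircase 1 = suminf w"
  by (simp add: staircase_def dyadic_floor_def)

lemma staircase_sub_dyadic_floor_le: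
  "staircase t - staircase (dyadic_floor N t) \<le> (\<Sum>m. w (m + N)) / 2^N"
proof -
  define s where "s = dyadic_floor N t"
  define bound where "bound m = (if N \<le> m then w m / 2^N else 0)" for m
  have "summable (\<lambda>m. w (m + N))" using summable_weight by (simp add: summable_iff_shift)
  then have "(\<lambda>m. bound (m + N)) sums ((\<Sum>m. w (m + N)) / 2^N)"
    unfolding bound_def by (simp add: sums_divide summable_sums)
  then have "bound sums ((\<Sum>m. w (m + N)) / 2^N + sum bound {..<N})"
    by (simp only: sums_iff_shift)
  moreover have "sum bound {..<N} = 0" by (simp add: bound_def)
  ultimately have bound_sums: "bound sums ((\<Sum>m. w (m + N)) / 2^N)" by simp
  have "w m * (dyadic_floor m t - dyadic_floor m s) \<le> bound m" for m
  proof (cases "N \<le> m")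
    case True
    have "dyadic_floor m t - dyadic_floor m s \<le> 1 / 2^N"
      using True dyadic_floor_le[of m t] less_dyadic_floor_add[of t N]
      by (simp add: s_def dyadic_floor_dyadic_floor_finer)
    then show ?thesis
      using True weight_pos[of m] by (simp add: bound_def divide_inverse mult_left_mono)
  next
    case False
    then show ?thesis by (simp add: s_def bound_def dyadic_floor_dyadic_floor_coarser)
  qed
  then have "(\<Sum>m. w m * (dyadic_floor m t - dyadic_floor m s)) \<le> suminf bound"
    by (intro suminf_le staircase_diff(2) sums_summable[OF bound_sums])
  then show ?thesis using sums_unique[OF bound_sums] by (simp add: staircase_diff(1) s_def)
qed

lemma staircase_image_subset_intervals:
  "staircase ` {0..1} \<subseteq>
     (\<Union>k\<le>(2::nat)^N. {staircase (real k / 2^N) .. staircase (real k / 2^N) + (\<Sum>m. w (m + N)) / 2^N})"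
proof
  fix y assume "y \<in> staircase ` {0..1}"
  then obtain t where t: "t \<in> {0..1}" "y = staircase t" by auto
  obtain k where k: "k \<le> 2^N" "dyadic_floor N t = real k / 2^N"
    using dyadic_floor_grid[OF t(1)] .
  have "staircase (real k / 2^N) \<le> y"
    using k(2) t(2) dyadic_floor_le[of N t] strict_mono_staircase by (simp add: strict_mono_less_eq)
  moreover have "y \<le> staircase (real k / 2^N) + (\<Sum>m. w (m + N)) / 2^N"
    using staircase_sub_dyadic_floor_le[of t N] k(2) t(2) by simp
  ultimately show "y \<in> (\<Union>k\<le>(2::nat)^N.
      {staircase (real k / 2^N) .. staircase (real k / 2^N) + (\<Sum>m. w (m + N)) / 2^N})"
    using k(1) by auto
qed

lemma negligible_closure_staircase_image: "negligible (closure (staircase ` {0..1}))"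
proof (subst negligible_outer_le, intro allI impI)
  fix e :: real assume "0 < e"
  define tail where "tail N = (\<Sum>m. w (m + N))" for N
  have tail_nonneg: "0 \<le> tail N" for N
    unfolding tail_def using summable_weight weight_pos
    by (intro suminf_nonneg) (auto simp: summable_iff_shift less_imp_le)
  obtain N where N: "tail N < e / 2"
    using suminf_exist_split[of "e / 2" w] \<open>0 < e\<close> summable_weight tail_nonneg
    by (auto simp: tail_def)
  define I where "I k = {staircase (real k / 2^N) .. staircase (real k / 2^N) + tail N / 2^N}" for k
  define T where "T = (\<Union>k\<le>(2::nat)^N. I k)"
  have "compact T" unfolding T_def I_def by (intro compact_UN) auto
  have "staircase ` {0..1} \<subseteq> T"
    using staircase_image_subset_intervals[of N] by (simp add: T_def I_def tail_def)
  then have "closure (staircase ` {0..1}) \<subseteq> T"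
    using \<open>compact T\<close> by (intro closure_minimal compact_imp_closed)
  moreover have "T \<in> lmeasurable" using \<open>compact T\<close> by (rule lmeasurable_compact)
  moreover have "measure lebesgue T \<le> e"
  proof -
    have "measure lebesgue T \<le> (\<Sum>k\<le>(2::nat)^N. measure lebesgue (I k))"
      unfolding T_def by (rule measure_UNION_le) (auto simp: I_def)
    also have "\<dots> = (2^N + 1) * (tail N / 2^N)"
      using tail_nonneg[of N] by (simp add: I_def)
    also have "\<dots> \<le> 2 * tail N"
      using tail_nonneg[of N] by (simp add: field_simps mult_le_cancel_left1)
    finally show ?thesis using N by simp
  qed
  ultimately show "\<exists>T. closure (staircase ` {0..1}) \<subseteq> T \<and> T \<in> lmeasurable \<and> measure lebesgue T \<le> e"
    by blast
qed

lemma abs_pseudo_inverse_staircase_diff_le: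
  assumes "\<bar>y - x\<bar> \<le> w n / 2^n"
  shows "\<bar>pseudo_inverse staircase y - pseudo_inverse staircase x\<bar> \<le> 1 / 2^n"
proof (rule abs_pseudo_inverse_diff_le[OF _ _ _ assms])
  show "mono_on {0..1} staircase"
    using strict_mono_staircase by (simp add: mono_onI strict_mono_less_eq)
qed (simp_all add: staircase_gap)

lemma continuous_pseudo_inverse_staircase: "continuous_on UNIV (pseudo_inverse staircase)"
proof (rule uniformly_continuous_imp_continuous, unfold uniformly_continuous_on_def, intro allI impI)
  fix e :: real assume "0 < e"
  then obtain n where n: "(1/2::real)^n < e" using real_arch_pow_inv[of e "1/2"] by auto
  have "dist (pseudo_inverse staircase x') (pseudo_inverse staircase x) < e"
    if "dist x' x < w n / 2^n" for x x'
    using abs_pseudo_inverse_staircase_diff_le[of x' x n] that n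
    by (simp add: dist_real_def power_one_over)
  moreover have "0 < w n / 2^n" using weight_pos by simp
  ultimately show "\<exists>d>0. \<forall>x\<in>UNIV. \<forall>x'\<in>UNIV. dist x' x < d \<longrightarrow>
      dist (pseudo_inverse staircase x') (pseudo_inverse staircase x) < e"
    by blast
qed

lemma pseudo_inverse_staircase_image: "pseudo_inverse staircase ` {0..suminf w} = {0..1}"
proof
  show "pseudo_inverse staircase ` {0..suminf w} \<subseteq> {0..1}"
    by (auto intro: pseudo_inverse_nonneg pseudo_inverse_le_1)
  show "{0..1} \<subseteq> pseudo_inverse staircase ` {0..suminf w}"
  proof
    fix t :: real assume t: "t \<in> {0..1}"
    then have "staircase 0 \<le> staircase t" "staircase t \<le> staircase 1"
      by (simp_all add: strict_mono_less_eq[OF strict_mono_staircase])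
    then have "staircase t \<in> {0..suminf w}" by (simp add: staircase_0 staircase_1)
    moreover have "pseudo_inverse staircase (staircase t) = t"
      using t by (intro pseudo_inverse_left_inverse monotone_on_subset[OF strict_mono_staircase]) auto
    ultimately show "t \<in> pseudo_inverse staircase ` {0..suminf w}" by (metis image_eqI)
  qed
qed

end

definition pronic_weight :: "nat \<Rightarrow> real" where
  "pronic_weight n = 1 / ((real n + 1) * (real n + 2))"

lemma pronic_weight_sums: "pronic_weight sums 1"
proof -
  have "(\<lambda>n. 1 / (real n + 1)) \<longlonglongrightarrow> 0" by real_asymp
  then have "(\<lambda>n. 1 / (real n + 1) - 1 / (real (Suc n) + 1)) sums (1 / (real 0 + 1) - 0)"
    by (rule telescope_sums')
  moreover have "1 / (real n + 1) - 1 / (real (Suc n) + 1) = pronic_weight n" for n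
    by (simp add: pronic_weight_def field_simps)
  ultimately show ?thesis by simp
qed

interpretation pronic: dyadic_staircase pronic_weight
  using pronic_weight_sums by unfold_locales (auto simp: pronic_weight_def sums_summable)

lemma holder_01_pseudo_inverse_pronic_staircase:
  fixes \<alpha> :: real
  assumes "0 < \<alpha>" "\<alpha> < 1"
  shows "holder_01 \<alpha> (pseudo_inverse pronic.staircase)"
proof -
  define \<delta> where "\<delta> n = pronic_weight n / 2^n" for n
  have \<delta>_pos: "0 < \<delta> n" for n by (simp add: \<delta>_def pronic_weight_def)
  have "\<delta> (Suc n) = 1 / ((real n + 2) * (real n + 3)) * (1/2)^Suc n" for n
    by (simp add: \<delta>_def pronic_weight_def power_one_over field_simps)
  then have "(\<lambda>n. (1/2)^n / \<delta> (Suc n) powr \<alpha>) \<longlonglongrightarrow> 0"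
    using assms by (simp only:) real_asymp
  then have "Bseq (\<lambda>n. (1/2)^n / \<delta> (Suc n) powr \<alpha>)" by (intro convergent_imp_Bseq convergentI)
  then obtain C where C: "\<forall>n. norm ((1/2)^n / \<delta> (Suc n) powr \<alpha>) \<le> C"
    unfolding Bseq_def by blast
  have rate: "1 / 2^n \<le> C * \<delta> (Suc n) powr \<alpha>" for n
  proof -
    have "0 < \<delta> (Suc n) powr \<alpha>" using \<delta>_pos[of "Suc n"] by simp
    moreover have "(1/2)^n / \<delta> (Suc n) powr \<alpha> \<le> C" using C abs_le_D1 real_norm_def by metis
    ultimately show ?thesis by (simp add: pos_divide_le_eq power_one_over mult_ac)
  qed
  show ?thesis
  proof (rule holder_01_if_modulus[where \<delta> = \<delta> and \<epsilon> = "\<lambda>n. 1 / 2^n" and B = 1 and C = C])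
    show "0 < \<alpha>" "0 < \<delta> n" "1 / 2^n \<le> C * \<delta> (Suc n) powr \<alpha>" for n
      using assms(1) \<delta>_pos rate by auto
    show "\<delta> \<longlonglongrightarrow> 0" unfolding \<delta>_def pronic_weight_def by real_asymp
    show "\<bar>pseudo_inverse pronic.staircase x\<bar> \<le> 1" for x
      using pseudo_inverse_nonneg[of pronic.staircase x] pseudo_inverse_le_1[of pronic.staircase x]
      by linarith
    show "\<bar>pseudo_inverse pronic.staircase x - pseudo_inverse pronic.staircase y\<bar> \<le> 1 / 2^n"
      if "\<bar>x - y\<bar> \<le> \<delta> n" for x y n
      using that unfolding \<delta>_def by (rule pronic.abs_pseudo_inverse_staircase_diff_le)
  qed
qed

theorem theorem4:
  shows "\<exists>f :: real \<Rightarrow> real.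
     continuous_on UNIV f \<and>
     (\<forall>\<alpha>. 0 < \<alpha> \<and> \<alpha> < 1 \<longrightarrow> holder_01 \<alpha> f) \<and>
     critical_set f \<in> sets lebesgue \<and>
     f ` critical_set f \<in> sets lebesgue \<and>
     emeasure lebesgue (f ` critical_set f) > 0 \<and>
     mutually_singular (distr (density lebesgue (indicator (critical_set f))) borel f) lborel"
proof -
  define F where "F = pseudo_inverse pronic.staircase"
  define K where "K = closure (pronic.staircase ` {0..1})"
  have locally_constant: "\<exists>e>0. \<forall>y\<in>ball x e. F y = F x" if "x \<notin> K" for x
    using that unfolding F_def K_def by (rule pseudo_inverse_locally_constant)
  have "negligible K" unfolding K_def by (rule pronic.negligible_closure_staircase_image)
  moreover have "{0..1} - critical_set F \<subseteq> K"
    using locally_constant in_critical_set_if_locally_constant by blast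
  ultimately have noncritical: "negligible ({0..1} - critical_set F)" by (rule negligible_subset)
  have continuous: "continuous_on UNIV F"
    unfolding F_def by (rule pronic.continuous_pseudo_inverse_staircase)
  have "F ` {0..1} = {0..1}"
    using pronic.pseudo_inverse_staircase_image sums_unique[OF pronic_weight_sums] by (simp add: F_def)
  then have image: "emeasure lebesgue (F ` critical_set F) = 1"
    using image_critical_set_lebesgue(2)[OF continuous_on_subset[OF continuous] noncritical] by simp
  have "countable (F ` (critical_set F - K))"
    using locally_constant by (intro countable_image_if_locally_constant) blast
  then have "mutually_singular (distr (density lebesgue (indicator (critical_set F))) borel F) lborel"
    using critical_set_lebesgue[OF noncritical] continuous \<open>negligible K\<close>
    by (intro mutually_singular_distr_density)
       (auto simp: negligible_iff_null_sets borel_measurable_continuous_onI intro: measurable_completion)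
  then show ?thesis
    using continuous holder_01_pseudo_inverse_pronic_staircase critical_set_lebesgue[OF noncritical]
      image_critical_set_lebesgue(1)[OF continuous_on_subset[OF continuous] noncritical] image
    by (intro exI[of _ F]) (simp add: F_def)
qed

end
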